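(* Let $\mu\in\mathrm{i}\mathbb{R}\setminus\{0\}$ be such that $\mu^{-1}D^{-1}+I^{(-1)}$ is nonsingular, and let $z(\mu):=e_m^{\mathsf T}\left(\mu^{-1}D^{-1}+I^{(-1)}\right)^{-1}e_m$. Then $|z(\mu)-1|=1$.
   Context: $M\ge1$, $m=2M+1$, $h>0$, $T>0$. Sinc time points $t_j=\dfrac{T e^{jh}}{1+e^{jh}}$, $j=-M,\dots,M$. $D=h\,\mathrm{diag}\big(t_{-M}(T-t_{-M})/T,\dots,t_M(T-t_M)/T\big)$. $I^{(-1)}\in\mathbb{R}^{m\times m}$ is the Toeplitz matrix with entries $I^{(-1)}_{l,j}=\frac12+\int_0^{l-j}\frac{\sin(\pi t)}{\pi t}\,dt$. $e_m=(1,\dots,1)^{\mathsf T}\in\mathbb{R}^m$. *)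

theory Defs
  imports "HOL-Analysis.Analysis" "Jordan_Normal_Form.Matrix"
begin

text \<open>Sinc points, indexed by i = 0..2M, corresponding to j = i - M.\<close>
definition sinc_pt :: "real \<Rightarrow> real \<Rightarrow> int \<Rightarrow> real" where
  "sinc_pt T h j = T * exp (real_of_int j * h) / (1 + exp (real_of_int j * h))"

definition Dmat :: "nat \<Rightarrow> real \<Rightarrow> real \<Rightarrow> complex mat" where
  "Dmat M h T = mat (2*M+1) (2*M+1) (\<lambda>(l,j).
     if l = j then complex_of_real (h * (sinc_pt T h (int j - int M) * (T - sinc_pt T h (int j - int M)) / T))
     else 0)"

text \<open>The Toeplitz matrix I^(-1): entry (l,j) = 1/2 + int_0^(l-j) sin(pi t)/(pi t) dt
  (oriented interval integral).\<close>
definition Iminus1 :: "nat \<Rightarrow> complex mat" where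
  "Iminus1 M = mat (2*M+1) (2*M+1) (\<lambda>(l,j).
     complex_of_real (1/2 + (LBINT t=0..(real_of_int (int l - int j)). sin (pi * t) / (pi * t))))"

definition ones_vec :: "nat \<Rightarrow> 'a::one vec" where
  "ones_vec n = vec n (\<lambda>_. 1)"

definition mat_inv :: "'a::comm_ring_1 mat \<Rightarrow> 'a mat" where
  "mat_inv A = (SOME B. B \<in> carrier_mat (dim_row A) (dim_row A) \<and> A * B = 1\<^sub>m (dim_row A) \<and> B * A = 1\<^sub>m (dim_row A))"

end

theory Submission imports Defs begin

text \<open>Let \<open>A = (1/\<mu>) D\<^sup>-\<^sup>1 + I\<close> with \<open>I\<close> the sinc Toeplitz matrix. As \<open>\<mu>\<close> is purely
  imaginary and \<open>D\<close> is a positive diagonal matrix, the first summand is skew-Hermitian; as the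
  sine integral is odd, \<open>I + I\<^sup>H\<close> is the all-ones matrix. Hence \<open>A + A\<^sup>H = e e\<^sup>T\<close>. For
  \<open>y = A\<^sup>-\<^sup>1 e\<close> and \<open>z = e\<^sup>T y\<close> we have \<open>y\<^sup>H A y = cnj z\<close>, so \<open>y\<^sup>H (A + A\<^sup>H) y = |z|\<^sup>2\<close>
  reads \<open>z + cnj z = |z|\<^sup>2\<close>, i.e. \<open>|z - 1| = 1\<close>.\<close>

lemma cmod_diff_one_eq_one:
  fixes z :: complex
  assumes "z + cnj z = z * cnj z"
  shows "cmod (z - 1) = 1"
proof -
  have "complex_of_real (cmod (z - 1) ^ 2) = (z - 1) * cnj (z - 1)"
    by (rule complex_norm_square)
  also have "\<dots> = 1" using assms by (simp add: algebra_simps)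
  finally have "cmod (z - 1) ^ 2 = 1" by (metis of_real_eq_1_iff)
  then show ?thesis by (smt (verit) norm_ge_zero power2_eq_1_iff)
qed

lemma cmod_sum_diff_one_eq_one:
  fixes a :: "nat \<Rightarrow> nat \<Rightarrow> complex" and y :: "nat \<Rightarrow> complex"
  assumes solves: "\<And>i. i < n \<Longrightarrow> (\<Sum>j<n. a i j * y j) = 1"
    and hermitian_part: "\<And>i j. i < n \<Longrightarrow> j < n \<Longrightarrow> a i j + cnj (a j i) = 1"
  shows "cmod ((\<Sum>j<n. y j) - 1) = 1"
proof -
  define z where "z = (\<Sum>j<n. y j)"
  have form: "(\<Sum>i<n. \<Sum>j<n. cnj (y i) * a i j * y j) = cnj z"
  proof -
    have "(\<Sum>i<n. \<Sum>j<n. cnj (y i) * a i j * y j) = (\<Sum>i<n. cnj (y i) * (\<Sum>j<n. a i j * y j))"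
      by (simp add: sum_distrib_left mult.assoc)
    then show ?thesis using solves by (simp add: z_def)
  qed
  have adjoint_form: "(\<Sum>i<n. \<Sum>j<n. cnj (y i) * cnj (a j i) * y j) = z"
  proof -
    have "(\<Sum>i<n. \<Sum>j<n. cnj (y i) * cnj (a j i) * y j) = (\<Sum>j<n. \<Sum>i<n. cnj (y i) * cnj (a j i) * y j)"
      by (rule sum.swap)
    also have "\<dots> = (\<Sum>j<n. y j * cnj (\<Sum>i<n. a j i * y i))"
      by (simp add: sum_distrib_left mult_ac)
    finally show ?thesis using solves by (simp add: z_def)
  qed
  have "(\<Sum>i<n. \<Sum>j<n. cnj (y i) * a i j * y j) + (\<Sum>i<n. \<Sum>j<n. cnj (y i) * cnj (a j i) * y j)
      = (\<Sum>i<n. \<Sum>j<n. cnj (y i) * (a i j + cnj (a j i)) * y j)"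
    by (simp only: sum.distrib[symmetric] distrib_left distrib_right)
  then have "cnj z + z = (\<Sum>i<n. \<Sum>j<n. cnj (y i) * (a i j + cnj (a j i)) * y j)"
    unfolding form adjoint_form .
  also have "\<dots> = (\<Sum>i<n. \<Sum>j<n. cnj (y i) * y j)" using hermitian_part by simp
  also have "\<dots> = cnj z * z" by (simp add: z_def sum_product)
  finally have "z + cnj z = z * cnj z" by (simp add: ac_simps)
  then show ?thesis unfolding z_def by (rule cmod_diff_one_eq_one)
qed

lemma cmod_ones_scalar_prod_diff_one_eq_one:
  fixes A :: "complex mat"
  assumes A: "A \<in> carrier_mat n n" and y: "y \<in> carrier_vec n"
    and solves: "A *\<^sub>v y = ones_vec n"
    and hermitian_part: "\<And>i j. i < n \<Longrightarrow> j < n \<Longrightarrow> A $$ (i,j) + cnj (A $$ (j,i)) = 1"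
  shows "cmod (scalar_prod (ones_vec n) y - 1) = 1"
proof -
  have "(\<Sum>j<n. A $$ (i,j) * vec_index y j) = 1" if "i < n" for i
    using arg_cong[OF solves, of "\<lambda>v. vec_index v i"] that A y
    by (simp add: ones_vec_def scalar_prod_def atLeast0LessThan)
  then have "cmod ((\<Sum>j<n. vec_index y j) - 1) = 1"
    using hermitian_part by (intro cmod_sum_diff_one_eq_one[of n "\<lambda>i j. A $$ (i,j)"])
  then show ?thesis
    using y by (simp add: scalar_prod_def ones_vec_def atLeast0LessThan)
qed

lemma mat_inv_correct:
  assumes "invertible_mat A" "A \<in> carrier_mat n n"
  shows "mat_inv A \<in> carrier_mat n n" "A * mat_inv A = 1\<^sub>m n" "mat_inv A * A = 1\<^sub>m n"
proof -
  from assms(1) obtain B where AB: "A * B = 1\<^sub>m (dim_row A)" and BA: "B * A = 1\<^sub>m (dim_row B)"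
    unfolding invertible_mat_def inverts_mat_def by blast
  have "dim_col B = n" using arg_cong[OF AB, of dim_col] assms(2) by simp
  moreover have "dim_row B = n" using arg_cong[OF BA, of dim_col] assms(2) by simp
  ultimately have "B \<in> carrier_mat (dim_row A) (dim_row A) \<and> A * B = 1\<^sub>m (dim_row A) \<and> B * A = 1\<^sub>m (dim_row A)"
    using AB BA assms(2) by auto
  then have "mat_inv A \<in> carrier_mat (dim_row A) (dim_row A) \<and> A * mat_inv A = 1\<^sub>m (dim_row A)
      \<and> mat_inv A * A = 1\<^sub>m (dim_row A)"
    unfolding mat_inv_def by (rule someI)
  then show "mat_inv A \<in> carrier_mat n n" "A * mat_inv A = 1\<^sub>m n" "mat_inv A * A = 1\<^sub>m n"
    using assms(2) by simp_all
qed

lemma mat_inv_eqI: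
  assumes A: "A \<in> carrier_mat n n" and B: "B \<in> carrier_mat n n"
    and AB: "A * B = 1\<^sub>m n" and BA: "B * A = 1\<^sub>m n"
  shows "mat_inv A = B"
proof -
  have "invertible_mat A"
    unfolding invertible_mat_def inverts_mat_def using A B AB BA by auto
  note inv = mat_inv_correct[OF this A]
  have "mat_inv A = (B * A) * mat_inv A" using BA inv(1) by simp
  also have "\<dots> = B * (A * mat_inv A)" using A B inv(1) by (simp add: assoc_mult_mat[of _ n n _ n _ n])
  finally show ?thesis using inv(2) B by simp
qed

lemma diag_mat_mult_diag_mat:
  "mat n n (\<lambda>(i,j). if i = j then d j else 0) * mat n n (\<lambda>(i,j). if i = j then e j else 0)
    = mat n n (\<lambda>(i,j). if i = j then d j * e j else (0 :: 'a :: semiring_1))"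
proof (rule eq_matI)
  fix i j assume "i < dim_row (mat n n (\<lambda>(i,j). if i = j then d j * e j else (0 :: 'a)))"
    "j < dim_col (mat n n (\<lambda>(i,j). if i = j then d j * e j else (0 :: 'a)))"
  then have ij: "i < n" "j < n" by simp_all
  then have "(mat n n (\<lambda>(i,j). if i = j then d j else 0) * mat n n (\<lambda>(i,j). if i = j then e j else 0)) $$ (i,j)
     = (\<Sum>k\<in>{0..<n}. (if i = k then d k else 0) * (if k = j then e j else 0))"
    by (simp add: scalar_prod_def)
  also have "\<dots> = (\<Sum>k\<in>{0..<n}. if k = i then (if i = j then d i * e i else 0) else 0)"
    by (rule sum.cong) auto
  finally show "(mat n n (\<lambda>(i,j). if i = j then d j else 0) * mat n n (\<lambda>(i,j). if i = j then e j else 0)) $$ (i,j)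
      = mat n n (\<lambda>(i,j). if i = j then d j * e j else 0) $$ (i,j)"
    using ij by simp
qed auto

lemma mat_inv_diag_mat:
  fixes d :: "nat \<Rightarrow> 'a :: field"
  assumes "\<And>j. j < n \<Longrightarrow> d j \<noteq> 0"
  shows "mat_inv (mat n n (\<lambda>(i,j). if i = j then d j else 0)) = mat n n (\<lambda>(i,j). if i = j then 1 / d j else 0)"
proof -
  have "mat n n (\<lambda>(i,j). if i = j then d j * (1 / d j) else 0) = 1\<^sub>m n"
    "mat n n (\<lambda>(i,j). if i = j then 1 / d j * d j else 0) = (1\<^sub>m n :: 'a mat)"
    using assms by auto
  then show ?thesis
    by (intro mat_inv_eqI[of _ n]) (simp_all add: diag_mat_mult_diag_mat)
qed

lemma sinc_pt_gt_0: "T > 0 \<Longrightarrow> 0 < sinc_pt T h j"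
  unfolding sinc_pt_def by (simp add: add_pos_pos)

lemma sinc_pt_less: "T > 0 \<Longrightarrow> sinc_pt T h j < T"
  unfolding sinc_pt_def by (simp add: add_pos_pos divide_less_eq)

lemma Dmat_diag_gt_0:
  assumes "h > 0" "T > 0" "j < 2*M+1"
  shows "Re (Dmat M h T $$ (j,j)) > 0" "Im (Dmat M h T $$ (j,j)) = 0"
  using assms sinc_pt_gt_0[OF assms(2)] sinc_pt_less[OF assms(2)] by (simp_all add: Dmat_def)

lemma mat_inv_Dmat:
  assumes "h > 0" "T > 0"
  shows "mat_inv (Dmat M h T)
    = mat (2*M+1) (2*M+1) (\<lambda>(i,j). if i = j then 1 / Dmat M h T $$ (j,j) else 0)"
proof -
  have "Dmat M h T = mat (2*M+1) (2*M+1) (\<lambda>(i,j). if i = j then Dmat M h T $$ (j,j) else 0)"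
    by (auto simp: Dmat_def)
  also have "mat_inv \<dots> = mat (2*M+1) (2*M+1) (\<lambda>(i,j). if i = j then 1 / Dmat M h T $$ (j,j) else 0)"
    using Dmat_diag_gt_0(1)[OF assms] by (intro mat_inv_diag_mat) force
  finally show ?thesis .
qed

lemma interval_integral_zero_reflect_even:
  fixes f :: "real \<Rightarrow> real"
  assumes "\<And>t. f (- t) = f t"
  shows "(LBINT t=0..ereal (- x). f t) = - (LBINT t=0..ereal x. f t)"
proof -
  have "(LBINT t=0..ereal (- x). f t) = (LBINT t=ereal x..0. f (- t))"
    by (subst interval_integral_reflect) simp
  also have "\<dots> = (LBINT t=ereal x..0. f t)"
    using assms by simp
  also have "\<dots> = - (LBINT t=0..ereal x. f t)"
    by (rule interval_integral_endpoints_reverse)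
  finally show ?thesis .
qed

lemma Iminus1_hermitian_part:
  assumes "i < 2*M+1" "j < 2*M+1"
  shows "Iminus1 M $$ (i,j) + cnj (Iminus1 M $$ (j,i)) = 1"
proof -
  define Si where "Si x = (LBINT t=0..ereal x. sin (pi * t) / (pi * t))" for x
  have "Si (real_of_int (int j - int i)) = - Si (real_of_int (int i - int j))"
    using interval_integral_zero_reflect_even[of "\<lambda>t. sin (pi * t) / (pi * t)" "real_of_int (int i - int j)"]
    by (simp add: Si_def)
  then show ?thesis
    using assms by (simp add: Iminus1_def flip: Si_def)
qed

theorem mainTheorem6:
  fixes M :: nat and h T :: real and \<mu> :: complex
  assumes "M \<ge> 1" and "h > 0" and "T > 0"
    and "Re \<mu> = 0" and "\<mu> \<noteq> 0"
    and "invertible_mat ((1 / \<mu>) \<cdot>\<^sub>m mat_inv (Dmat M h T) + Iminus1 M)"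
  shows "cmod ((ones_vec (2*M+1)) \<bullet>
            (mat_inv ((1 / \<mu>) \<cdot>\<^sub>m mat_inv (Dmat M h T) + Iminus1 M) *\<^sub>v ones_vec (2*M+1)) - 1) = 1"
proof -
  define n where "n = 2*M+1"
  define E where "E = mat_inv (Dmat M h T)"
  define A where "A = (1 / \<mu>) \<cdot>\<^sub>m E + Iminus1 M"
  have E: "E \<in> carrier_mat n n" by (simp add: E_def n_def mat_inv_Dmat assms(2,3))
  have A: "A \<in> carrier_mat n n" by (simp add: A_def n_def Iminus1_def)
  note inv = mat_inv_correct[OF assms(6)[folded E_def, folded A_def] A]
  have ones: "(ones_vec n :: complex vec) \<in> carrier_vec n" by (simp add: ones_vec_def)
  have "A *\<^sub>v (mat_inv A *\<^sub>v ones_vec n) = ones_vec n"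
    using A inv ones by (simp add: assoc_mult_mat_vec[symmetric, of A n n "mat_inv A" n "ones_vec n"])
  moreover have "A $$ (i,j) + cnj (A $$ (j,i)) = 1" if ij: "i < n" "j < n" for i j
  proof -
    have "cnj \<mu> = - \<mu>" using assms(4) by (simp add: complex_eq_iff)
    moreover have "cnj (E $$ (j,i)) = E $$ (i,j)"
      using Dmat_diag_gt_0(2)[OF assms(2,3)] ij
      by (auto simp: E_def mat_inv_Dmat[OF assms(2,3)] n_def complex_eq_iff Im_divide)
    ultimately have skew: "E $$ (i,j) / \<mu> + cnj (E $$ (j,i) / \<mu>) = 0" by simp
    have "A $$ (k,l) = E $$ (k,l) / \<mu> + Iminus1 M $$ (k,l)" if "k < n" "l < n" for k l
      using that E by (simp add: A_def n_def Iminus1_def)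
    then show ?thesis
      using ij skew Iminus1_hermitian_part[of i M j] by (simp add: n_def algebra_simps)
  qed
  ultimately show ?thesis
    using cmod_ones_scalar_prod_diff_one_eq_one[OF A] inv(1) ones by (simp add: A_def E_def n_def)
qed

end
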